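(* Let $G$ be a group and $\mathcal{P}$ a poset, under inclusion, of subgroups of $G$ such that $1\in\mathcal{P}$ and the inclusions $\{U\hookrightarrow G\}_{U\in\mathcal{P}}$ form a colimit cone, i.e. $G\cong\operatorname{colim}_{U\in\mathcal{P}}U$. Let $H\colon\mathcal{P}\to\mathrm{Ab}$ be the functor with $H(U)=\{\sum_{g\in G}n_g g\in\mathbb{Z}[G]\mid \sum_{u\in U}n_{ug}=0\text{ for all }g\in G\}$ and sending inclusions of subgroups to inclusions. Let $U\in\mathcal{P}$ and suppose that for every finite subset $J\subset\mathcal{P}_{\le U}$, setting $M=\max J$, the subgroup $\langle V\mid V\in M\rangle$ is the free product of the subgroups $\{V\}_{V\in M}$ with amalgamated subgroup $\bigcap_{V\in M}V$, and $\bigcap_{V\in M}V\in\mathcal{P}$. Then $H$ is pseudo-projective at $U$.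
   Context: $\mathcal{P}_{\le U}=\{V\in\mathcal{P}:V\le U\}$; $\max J$ is the set of maximal elements of $J$. For $V\le W$ in $\mathcal{P}$, $H(V<W)$ is the inclusion $H(V)\subseteq H(W)$, and $\operatorname{Im}_H(V)=\sum_{W<V}\operatorname{Im}H(W<V)$. $H$ is pseudo-projective at $U$ if for every finite $J\subset\mathcal{P}_{\le U}$ and every $\oplus_{V\in J}x_V\in\bigoplus_{V\in J}H(V)$ with $\sum_{V\in J}H(V<U)(x_V)=0$, one has $x_V\in\operatorname{Im}_H(V)$ for all $V\in\max J$. *)

theory Defs
  imports "HOL-Algebra.Algebra"
begin

text \<open>Any colimit of a diagram of subgroups of G (and any amalgamated free product of
  subgroups of G) has elements representable as words over pairs (subgroup, element),
  so it suffices to test the universal property against groups whose carrier lies in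
  the type below.\<close>
type_synonym 'a test_group = "(('a set \<times> 'a) list) monoid"

definition colimit_cone :: "('a, 'm) monoid_scheme \<Rightarrow> 'a set set \<Rightarrow> bool" where
  "colimit_cone G P \<longleftrightarrow>
    (\<forall>(L :: 'a test_group) (f :: 'a set \<Rightarrow> 'a \<Rightarrow> ('a set \<times> 'a) list).
       group L \<and> (\<forall>U\<in>P. f U \<in> hom (G\<lparr>carrier := U\<rparr>) L) \<and>
       (\<forall>V\<in>P. \<forall>W\<in>P. V \<subseteq> W \<longrightarrow> (\<forall>v\<in>V. f W v = f V v)) \<longrightarrow>
       (\<exists>\<phi>\<in>hom G L. (\<forall>U\<in>P. \<forall>u\<in>U. \<phi> u = f U u) \<and>
          (\<forall>\<psi>\<in>hom G L. (\<forall>U\<in>P. \<forall>u\<in>U. \<psi> u = f U u) \<longrightarrow>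
              (\<forall>g\<in>carrier G. \<psi> g = \<phi> g))))"

definition amalgamated_free_product ::
  "('a, 'm) monoid_scheme \<Rightarrow> 'a set set \<Rightarrow> 'a set \<Rightarrow> bool" where
  "amalgamated_free_product G M A \<longleftrightarrow>
    (let K = generate G (\<Union>M) in
     \<forall>(L :: 'a test_group) (f :: 'a set \<Rightarrow> 'a \<Rightarrow> ('a set \<times> 'a) list).
       group L \<and> (\<forall>V\<in>M. f V \<in> hom (G\<lparr>carrier := V\<rparr>) L) \<and>
       (\<forall>V\<in>M. \<forall>W\<in>M. \<forall>a\<in>A. f V a = f W a) \<longrightarrow>
       (\<exists>\<phi>\<in>hom (G\<lparr>carrier := K\<rparr>) L. (\<forall>V\<in>M. \<forall>v\<in>V. \<phi> v = f V v) \<and>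
          (\<forall>\<psi>\<in>hom (G\<lparr>carrier := K\<rparr>) L. (\<forall>V\<in>M. \<forall>v\<in>V. \<psi> v = f V v) \<longrightarrow>
              (\<forall>x\<in>K. \<psi> x = \<phi> x))))"

definition group_ring_Z :: "('a, 'm) monoid_scheme \<Rightarrow> ('a \<Rightarrow> int) set" where
  "group_ring_Z G = {n. finite {g. n g \<noteq> 0} \<and> (\<forall>g. g \<notin> carrier G \<longrightarrow> n g = 0)}"

definition H_fun :: "('a, 'm) monoid_scheme \<Rightarrow> 'a set \<Rightarrow> ('a \<Rightarrow> int) set" where
  "H_fun G U = {n \<in> group_ring_Z G.
      \<forall>g\<in>carrier G. (\<Sum>u\<in>{u\<in>U. n (u \<otimes>\<^bsub>G\<^esub> g) \<noteq> 0}. n (u \<otimes>\<^bsub>G\<^esub> g)) = 0}"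

definition Im_H :: "('a, 'm) monoid_scheme \<Rightarrow> 'a set set \<Rightarrow> 'a set \<Rightarrow> ('a \<Rightarrow> int) set" where
  "Im_H G P V = {y. \<exists>F x. finite F \<and> F \<subseteq> {W\<in>P. W \<subset> V} \<and>
       (\<forall>W\<in>F. x W \<in> H_fun G W) \<and> y = (\<lambda>g. \<Sum>W\<in>F. x W g)}"

definition max_elems :: "'a set set \<Rightarrow> 'a set set" where
  "max_elems J = {V\<in>J. \<not> (\<exists>W\<in>J. V \<subset> W)}"

definition pseudo_projective_at :: "('a, 'm) monoid_scheme \<Rightarrow> 'a set set \<Rightarrow> 'a set \<Rightarrow> bool" where
  "pseudo_projective_at G P U \<longleftrightarrow>
    (\<forall>J x. finite J \<and> J \<subseteq> {V\<in>P. V \<subseteq> U} \<and> (\<forall>V\<in>J. x V \<in> H_fun G V) \<and>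
       (\<forall>g. (\<Sum>V\<in>J. x V g) = 0) \<longrightarrow>
       (\<forall>V\<in>max_elems J. x V \<in> Im_H G P V))"

end

theory Submission
  imports Defs
begin

text \<open>
  Push every summand \<open>x\<^sub>W\<close> up to a maximal element above \<open>W\<close>. For \<open>V\<close> maximal this
  changes \<open>x\<^sub>V\<close> only by an element of \<open>Im\<^sub>H(V)\<close>, and the new summands \<open>y\<^sub>V\<close> satisfy
  \<open>\<Sum> y\<^sub>V = 0\<close> over the set \<open>M\<close> of maximal elements. If \<open>M = {V}\<close> then \<open>y\<^sub>V = 0\<close>;
  otherwise it suffices to show \<open>y\<^sub>V \<in> H(A)\<close> for \<open>A = \<Inter>M\<close>, a proper subgroup of \<open>V\<close>
  lying in \<open>\<P>\<close>.

  The amalgamated product \<open>K = *\<^sub>A V\<close> acts on van der Waerden normal forms \<open>a t\<^sub>1 \<cdots> t\<^sub>n\<close>.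
  Composing with a \<open>K\<close>-equivariant map \<open>G \<rightarrow> K\<close> assigns to every \<open>g \<in> G\<close> a reduced
  word \<open>D g\<close> that is unchanged by left multiplication with \<open>A\<close> and gains a leading letter
  from \<open>V\<close> under \<open>v \<in> V - A\<close> whenever it does not already start in \<open>V\<close>. Suppose the
  sum of some \<open>y\<^sub>V\<close> over some coset \<open>A g\<close> is nonzero, and take such a pair with \<open>D g\<close>
  as deep as possible. If \<open>D g\<close> starts in \<open>V\<close>, the relation \<open>\<Sum> y\<^sub>W = 0\<close> makes the sum
  of another \<open>y\<^sub>W\<close> over \<open>A g\<close> nonzero, and that pair counts as deeper. Otherwise, since
  \<open>y\<^sub>V\<close> sums to zero over \<open>V g\<close>, it has a nonzero sum over another \<open>A\<close>-coset \<open>A v g\<close>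
  inside \<open>V g\<close>, whose word is one letter longer. So all these coset sums vanish, i.e.
  \<open>y\<^sub>V \<in> H(A)\<close>.
\<close>

section \<open>Coset sums and the functor \<open>H\<close>\<close>

definition supp_sum :: "('a \<Rightarrow> int) \<Rightarrow> 'a set \<Rightarrow> int" where
  "supp_sum n S = (\<Sum>x\<in>{x\<in>S. n x \<noteq> 0}. n x)"

lemma supp_sum_eq_sum:
  assumes "finite F" "{x. n x \<noteq> 0} \<subseteq> F"
  shows "supp_sum n S = sum n (S \<inter> F)"
  unfolding supp_sum_def using assms by (intro sum.mono_neutral_left) auto

lemma supp_sum_sum:
  assumes "finite I" "\<And>i. i \<in> I \<Longrightarrow> finite {x. n i x \<noteq> 0}"
  shows "supp_sum (\<lambda>x. \<Sum>i\<in>I. n i x) S = (\<Sum>i\<in>I. supp_sum (n i) S)"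
proof -
  define F where "F = (\<Union>i\<in>I. {x. n i x \<noteq> 0})"
  have F: "finite F" "\<And>i. i \<in> I \<Longrightarrow> {x. n i x \<noteq> 0} \<subseteq> F"
    using assms by (auto simp: F_def)
  have "{x. (\<Sum>i\<in>I. n i x) \<noteq> 0} \<subseteq> F"
  proof
    fix x assume "x \<in> {x. (\<Sum>i\<in>I. n i x) \<noteq> 0}"
    then obtain i where "i \<in> I" "n i x \<noteq> 0"
      by (blast elim: sum.not_neutral_contains_not_neutral)
    then show "x \<in> F" by (auto simp: F_def)
  qed
  then have "supp_sum (\<lambda>x. \<Sum>i\<in>I. n i x) S = (\<Sum>x\<in>S \<inter> F. \<Sum>i\<in>I. n i x)"
    by (rule supp_sum_eq_sum[OF F(1)])
  also have "\<dots> = (\<Sum>i\<in>I. \<Sum>x\<in>S \<inter> F. n i x)"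
    by (rule sum.swap)
  also have "\<dots> = (\<Sum>i\<in>I. supp_sum (n i) S)"
    using supp_sum_eq_sum[OF F(1) F(2)] by simp
  finally show ?thesis .
qed

lemma supp_sum_add:
  assumes "finite {x. a x \<noteq> 0}" "finite {x. b x \<noteq> 0}"
  shows "supp_sum (\<lambda>x. a x + b x) S = supp_sum a S + supp_sum b S"
proof -
  define F where "F = {x. a x \<noteq> 0} \<union> {x. b x \<noteq> 0}"
  have F: "finite F" using assms by (simp add: F_def)
  have "{x. a x + b x \<noteq> 0} \<subseteq> F" by (auto simp: F_def)
  then have "supp_sum (\<lambda>x. a x + b x) S = sum a (S \<inter> F) + sum b (S \<inter> F)"
    using supp_sum_eq_sum[OF F] by (simp add: sum.distrib)
  also have "\<dots> = supp_sum a S + supp_sum b S"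
    using supp_sum_eq_sum[OF F] by (auto simp: F_def)
  finally show ?thesis .
qed

lemma supp_sum_uminus: "supp_sum (\<lambda>x. - a x) S = - supp_sum a S"
  by (simp add: supp_sum_def sum_negf)

lemma supp_sum_Int_Diff:
  assumes "finite {x. n x \<noteq> 0}"
  shows "supp_sum n S = supp_sum n (S \<inter> T) + supp_sum n (S - T)"
proof -
  define F where "F = {x. n x \<noteq> 0}"
  have "(S \<inter> T) \<inter> F = (S \<inter> F) \<inter> T" "(S - T) \<inter> F = (S \<inter> F) - T" by blast+
  then show ?thesis
    using supp_sum_eq_sum[OF assms subset_refl] assms
    by (simp add: F_def sum.Int_Diff[of "S \<inter> {x. n x \<noteq> 0}" _ T])
qed

lemma supp_sum_Union_eq_0:
  assumes fin: "finite {x. n x \<noteq> 0}" and "pairwise disjnt \<C>"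
    and zero: "\<And>C. C \<in> \<C> \<Longrightarrow> supp_sum n C = 0"
  shows "supp_sum n (\<Union>\<C>) = 0"
proof -
  define F where "F = {x. n x \<noteq> 0}"
  have supp: "supp_sum n S = sum n (S \<inter> F)" for S
    unfolding F_def by (rule supp_sum_eq_sum[OF fin subset_refl])
  have "\<Union>\<C> \<inter> F = \<Union>((\<lambda>C. C \<inter> F) ` \<C>)" by blast
  then have "supp_sum n (\<Union>\<C>) = sum n (\<Union>((\<lambda>C. C \<inter> F) ` \<C>))"
    by (simp only: supp)
  also have "\<dots> = (\<Sum>C\<in>(\<lambda>C. C \<inter> F) ` \<C>. sum n C)"
  proof -
    have "\<forall>C\<in>(\<lambda>C. C \<inter> F) ` \<C>. finite C"
      using fin unfolding F_def by blast
    moreover have "\<forall>C\<in>(\<lambda>C. C \<inter> F) ` \<C>. \<forall>C'\<in>(\<lambda>C. C \<inter> F) ` \<C>. C \<noteq> C' \<longrightarrow> C \<inter> C' = {}"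
    proof (intro ballI impI)
      fix D D' assume "D \<in> (\<lambda>C. C \<inter> F) ` \<C>" "D' \<in> (\<lambda>C. C \<inter> F) ` \<C>" "D \<noteq> D'"
      then obtain C C' where "C \<in> \<C>" "C' \<in> \<C>" "C \<noteq> C'" "D = C \<inter> F" "D' = C' \<inter> F"
        by blast
      then show "D \<inter> D' = {}"
        using assms(2) unfolding pairwise_def disjnt_def by blast
    qed
    ultimately have "sum n (\<Union>((\<lambda>C. C \<inter> F) ` \<C>)) = (sum \<circ> sum) n ((\<lambda>C. C \<inter> F) ` \<C>)"
      by (rule sum.Union_disjoint)
    then show ?thesis
      by (simp only: comp_apply)
  qed
  also have "\<dots> = 0"
    using zero by (intro sum.neutral) (auto simp: supp)
  finally show ?thesis .
qed

context group
begin

lemma supp_sum_rcosets_eq_0: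
  assumes "subgroup W G" "finite {x. n x \<noteq> 0}" "S \<subseteq> carrier G"
    and "\<And>b. b \<in> S \<Longrightarrow> W #> b \<subseteq> S" "\<And>b. b \<in> S \<Longrightarrow> supp_sum n (W #> b) = 0"
  shows "supp_sum n S = 0"
proof -
  have "S = \<Union>((\<lambda>b. W #> b) ` S)"
    using assms(3,4) rcos_self[OF _ assms(1)] by blast
  moreover have "pairwise disjnt ((\<lambda>b. W #> b) ` S)"
    using assms(3) subgroup.subset[OF assms(1)]
    by (intro pairwise_subset[OF rcos_disjoint[OF assms(1)]]) (auto intro: rcosetsI)
  then have "supp_sum n (\<Union>((\<lambda>b. W #> b) ` S)) = 0"
    using assms(5) by (intro supp_sum_Union_eq_0[OF assms(2)]) auto
  ultimately show ?thesis by simp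
qed

lemma supp_sum_rcoset_eq:
  assumes "U \<subseteq> carrier G" "g \<in> carrier G"
  shows "(\<Sum>u\<in>{u\<in>U. n (u \<otimes> g) \<noteq> 0}. n (u \<otimes> g)) = supp_sum n (U #> g)"
proof -
  have inj: "inj_on (\<lambda>u. u \<otimes> g) {u\<in>U. n (u \<otimes> g) \<noteq> 0}"
    using assms by (auto intro!: inj_onI simp: subsetD)
  have "{x \<in> U #> g. n x \<noteq> 0} = (\<lambda>u. u \<otimes> g) ` {u\<in>U. n (u \<otimes> g) \<noteq> 0}"
    by (auto simp: r_coset_def)
  then have "supp_sum n (U #> g) = sum (n \<circ> (\<lambda>u. u \<otimes> g)) {u\<in>U. n (u \<otimes> g) \<noteq> 0}"
    unfolding supp_sum_def by (simp only: sum.reindex[OF inj])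
  then show ?thesis
    by (simp only: o_def)
qed

lemma H_fun_iff:
  assumes "U \<subseteq> carrier G"
  shows "n \<in> H_fun G U \<longleftrightarrow> n \<in> group_ring_Z G \<and> (\<forall>g\<in>carrier G. supp_sum n (U #> g) = 0)"
proof -
  have "(\<Sum>u\<in>{u\<in>U. n (u \<otimes> g) \<noteq> 0}. n (u \<otimes> g)) = 0 \<longleftrightarrow> supp_sum n (U #> g) = 0"
    if "g \<in> carrier G" for g
    by (simp only: supp_sum_rcoset_eq[OF assms that])
  then have "(\<forall>g\<in>carrier G. (\<Sum>u\<in>{u\<in>U. n (u \<otimes> g) \<noteq> 0}. n (u \<otimes> g)) = 0) \<longleftrightarrow>
      (\<forall>g\<in>carrier G. supp_sum n (U #> g) = 0)"
    by (rule ball_cong[OF refl])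
  then show ?thesis
    unfolding H_fun_def by (simp only: mem_Collect_eq)
qed

lemma rcoset_mono:
  assumes "A \<subseteq> V" "subgroup V G" "b \<in> V #> g" "g \<in> carrier G"
  shows "A #> b \<subseteq> V #> g"
  using repr_independence[OF assms(3,4,2)] assms(1) by (auto simp: r_coset_def)

lemma supp_sum_subcoset:
  assumes A: "subgroup A G" and V: "subgroup V G" and "A \<subseteq> V" and g: "g \<in> carrier G"
    and fin: "finite {x. n x \<noteq> 0}"
    and other: "\<And>v. v \<in> V \<Longrightarrow> v \<notin> A \<Longrightarrow> supp_sum n (A #> (v \<otimes> g)) = 0"
  shows "supp_sum n (A #> g) = supp_sum n (V #> g)"
proof -
  have VA: "(V #> g) \<inter> (A #> g) = A #> g"
    using rcoset_mono[OF \<open>A \<subseteq> V\<close> V rcos_self[OF g V] g] by blast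
  have "supp_sum n ((V #> g) - (A #> g)) = 0"
  proof (rule supp_sum_rcosets_eq_0[OF A fin])
    show "(V #> g) - (A #> g) \<subseteq> carrier G"
      using r_coset_subset_G[OF subgroup.subset[OF V] g] by blast
    fix b assume b: "b \<in> (V #> g) - (A #> g)"
    then obtain v where v: "v \<in> V" "b = v \<otimes> g" unfolding r_coset_def by blast
    have bc: "b \<in> carrier G"
      using v g subgroup.mem_carrier[OF V] by simp
    have "x \<notin> A #> g" if "x \<in> A #> b" for x
    proof
      assume "x \<in> A #> g"
      then have "A #> b = A #> g"
        using repr_independence[OF that bc A] repr_independence[OF _ g A] by simp
      then show False
        using b rcos_self[OF bc A] by simp
    qed
    then show "A #> b \<subseteq> (V #> g) - (A #> g)"
      using rcoset_mono[OF \<open>A \<subseteq> V\<close> V _ g] b by blast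
    have "v \<notin> A"
      using b v rcosI[OF _ subgroup.subset[OF A] g] by blast
    then show "supp_sum n (A #> b) = 0"
      using other v by simp
  qed
  then show ?thesis
    using supp_sum_Int_Diff[OF fin, of "V #> g" "A #> g"] VA by simp
qed

lemma H_fun_zero: "U \<subseteq> carrier G \<Longrightarrow> (\<lambda>x. 0) \<in> H_fun G U"
  by (simp add: H_fun_iff group_ring_Z_def supp_sum_def)

lemma H_fun_add:
  assumes U: "U \<subseteq> carrier G" and "a \<in> H_fun G U" "b \<in> H_fun G U"
  shows "(\<lambda>x. a x + b x) \<in> H_fun G U"
proof -
  have fin: "finite {x. a x \<noteq> 0}" "finite {x. b x \<noteq> 0}"
    using assms by (auto simp: H_fun_def group_ring_Z_def)
  have "{x. a x + b x \<noteq> 0} \<subseteq> {x. a x \<noteq> 0} \<union> {x. b x \<noteq> 0}" by auto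
  then have "(\<lambda>x. a x + b x) \<in> group_ring_Z G"
    using assms fin by (auto simp: H_fun_def group_ring_Z_def intro: finite_subset)
  then show ?thesis
    using assms by (simp add: H_fun_iff[OF U] supp_sum_add[OF fin])
qed

lemma H_fun_uminus:
  assumes U: "U \<subseteq> carrier G" and "a \<in> H_fun G U"
  shows "(\<lambda>x. - a x) \<in> H_fun G U"
  using assms by (simp add: H_fun_iff[OF U] supp_sum_uminus group_ring_Z_def)

lemma H_fun_sum:
  assumes U: "U \<subseteq> carrier G" and "finite I" "\<And>i. i \<in> I \<Longrightarrow> x i \<in> H_fun G U"
  shows "(\<lambda>g. \<Sum>i\<in>I. x i g) \<in> H_fun G U"
  using assms(2,3)
proof (induction I rule: finite_induct)
  case empty
  then show ?case using H_fun_zero[OF U] by simp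
next
  case (insert i I)
  then show ?case using H_fun_add[OF U, of "x i" "\<lambda>g. \<Sum>i\<in>I. x i g"] by simp
qed

lemma H_fun_mono:
  assumes W: "subgroup W G" and V: "subgroup V G" and "W \<subseteq> V"
  shows "H_fun G W \<subseteq> H_fun G V"
proof
  fix n assume n: "n \<in> H_fun G W"
  have Vc: "V \<subseteq> carrier G" using V by (rule subgroup.subset)
  have fin: "finite {x. n x \<noteq> 0}"
    using n by (simp add: H_fun_def group_ring_Z_def)
  have W0: "supp_sum n (W #> b) = 0" if "b \<in> carrier G" for b
    using n that H_fun_iff[OF subgroup.subset[OF W]] by blast
  have "supp_sum n (V #> g) = 0" if g: "g \<in> carrier G" for g
  proof (rule supp_sum_rcosets_eq_0[OF W fin])
    show "V #> g \<subseteq> carrier G" by (rule r_coset_subset_G[OF Vc g])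
    fix b assume "b \<in> V #> g"
    then show "W #> b \<subseteq> V #> g" "supp_sum n (W #> b) = 0"
      using rcoset_mono[OF \<open>W \<subseteq> V\<close> V _ g] W0 r_coset_subset_G[OF Vc g] by blast+
  qed
  then show "n \<in> H_fun G V"
    using n H_fun_iff[OF Vc] by (simp add: H_fun_def)
qed

end

section \<open>Reduction to the maximal elements\<close>

lemma Im_H_zero: "(\<lambda>g. 0) \<in> Im_H G P V"
  unfolding Im_H_def by (intro CollectI exI[of _ "{}"]) simp

lemma H_fun_subset_Im_H:
  assumes "W \<in> P" "W \<subset> V"
  shows "H_fun G W \<subseteq> Im_H G P V"
proof
  fix n assume "n \<in> H_fun G W"
  then show "n \<in> Im_H G P V"
    unfolding Im_H_def using assms by (intro CollectI exI[of _ "{W}"] exI[of _ "\<lambda>_. n"]) auto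
qed

lemma max_elems_subset: "max_elems J \<subseteq> J"
  by (auto simp: max_elems_def)

lemma ex_max_elems_above:
  assumes "finite J" "W \<in> J"
  shows "\<exists>V\<in>max_elems J. W \<subseteq> V"
proof -
  obtain V where "V \<in> J" "W \<subseteq> V" "\<forall>V'\<in>J. V \<subseteq> V' \<longrightarrow> V = V'"
    using finite_has_maximal2[OF assms] by blast
  then show ?thesis
    unfolding max_elems_def by blast
qed

lemma ex_max_elems_retraction:
  assumes "finite J"
  obtains \<sigma> where "\<And>W. W \<in> J \<Longrightarrow> \<sigma> W \<in> max_elems J" "\<And>W. W \<in> J \<Longrightarrow> W \<subseteq> \<sigma> W"
    and "\<And>V. V \<in> max_elems J \<Longrightarrow> \<sigma> V = V"
proof -
  have "\<forall>W\<in>J. \<exists>V. V \<in> max_elems J \<and> W \<subseteq> V \<and> (W \<in> max_elems J \<longrightarrow> V = W)"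
    using ex_max_elems_above[OF assms] by blast
  then obtain \<sigma> where \<sigma>: "\<forall>W\<in>J. \<sigma> W \<in> max_elems J \<and> W \<subseteq> \<sigma> W \<and> (W \<in> max_elems J \<longrightarrow> \<sigma> W = W)"
    by metis
  show thesis
  proof (rule that)
    show "\<sigma> W \<in> max_elems J" "W \<subseteq> \<sigma> W" if "W \<in> J" for W
      using \<sigma> that by blast+
    show "\<sigma> V = V" if "V \<in> max_elems J" for V
      using \<sigma> that max_elems_subset by blast
  qed
qed

lemma Inter_max_elems_psubset:
  assumes "V \<in> max_elems J" "V' \<in> max_elems J" "V \<noteq> V'"
  shows "\<Inter>(max_elems J) \<subset> V"
proof -
  have "\<not> V \<subset> V'"
    using assms(1,2) by (auto simp: max_elems_def)
  then have "\<not> V \<subseteq> \<Inter>(max_elems J)"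
    using assms by blast
  then show ?thesis
    using assms(1) by blast
qed

context group
begin

lemma Im_H_diff:
  assumes P: "\<forall>W\<in>P. subgroup W G" and "a \<in> Im_H G P V" "b \<in> Im_H G P V"
  shows "(\<lambda>g. a g - b g) \<in> Im_H G P V"
proof -
  obtain F1 x1 where F1: "finite F1" "F1 \<subseteq> {W\<in>P. W \<subset> V}" "\<forall>W\<in>F1. x1 W \<in> H_fun G W"
    and a: "a = (\<lambda>g. \<Sum>W\<in>F1. x1 W g)"
    using assms(2) by (auto simp: Im_H_def)
  obtain F2 x2 where F2: "finite F2" "F2 \<subseteq> {W\<in>P. W \<subset> V}" "\<forall>W\<in>F2. x2 W \<in> H_fun G W"
    and b: "b = (\<lambda>g. \<Sum>W\<in>F2. x2 W g)"
    using assms(3) by (auto simp: Im_H_def)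
  define x1' where "x1' W g = (if W \<in> F1 then x1 W g else 0)" for W g
  define x2' where "x2' W g = (if W \<in> F2 then x2 W g else 0)" for W g
  have H: "(\<lambda>g. x1' W g - x2' W g) \<in> H_fun G W" if "W \<in> F1 \<union> F2" for W
  proof -
    have Wc: "W \<subseteq> carrier G"
      using that F1(2) F2(2) P subgroup.subset by blast
    have "x1' W \<in> H_fun G W"
      using F1(3) H_fun_zero[OF Wc] by (cases "W \<in> F1") (simp_all add: x1'_def[abs_def])
    moreover have "x2' W \<in> H_fun G W"
      using F2(3) H_fun_zero[OF Wc] by (cases "W \<in> F2") (simp_all add: x2'_def[abs_def])
    ultimately show ?thesis
      using H_fun_add[OF Wc _ H_fun_uminus[OF Wc]] by simp
  qed
  have "(\<lambda>g. a g - b g) = (\<lambda>g. \<Sum>W\<in>F1 \<union> F2. x1' W g - x2' W g)"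
  proof
    fix g
    have "(\<Sum>W\<in>F1 \<union> F2. x1' W g) = a g" "(\<Sum>W\<in>F2 \<union> F1. x2' W g) = b g"
      unfolding a b x1'_def x2'_def using F1(1) F2(1)
      by (simp_all only: sum.inter_restrict[symmetric] finite_Un Int_absorb1 Un_upper1)
    then show "a g - b g = (\<Sum>W\<in>F1 \<union> F2. x1' W g - x2' W g)"
      by (simp add: sum_subtractf Un_commute)
  qed
  moreover have "F1 \<union> F2 \<subseteq> {W\<in>P. W \<subset> V}"
    using F1(2) F2(2) by (rule Un_least)
  ultimately show ?thesis
    unfolding Im_H_def using F1(1) F2(1) H
    by (intro CollectI exI[of _ "F1 \<union> F2"] exI[of _ "\<lambda>W g. x1' W g - x2' W g"]) simp
qed

lemma collect_at_max_elems:
  assumes finJ: "finite J" and sub: "\<forall>V\<in>J. subgroup V G" and x: "\<forall>V\<in>J. x V \<in> H_fun G V"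
  obtains y where "\<forall>V\<in>max_elems J. y V \<in> H_fun G V"
    and "\<forall>g. (\<Sum>V\<in>max_elems J. y V g) = (\<Sum>V\<in>J. x V g)"
    and "\<forall>V\<in>max_elems J. \<exists>R. finite R \<and> R \<subseteq> {W\<in>J. W \<subset> V} \<and>
           x V = (\<lambda>g. y V g - (\<Sum>W\<in>R. x W g))"
proof -
  obtain \<sigma> where \<sigma>: "\<And>W. W \<in> J \<Longrightarrow> \<sigma> W \<in> max_elems J" "\<And>W. W \<in> J \<Longrightarrow> W \<subseteq> \<sigma> W"
    and \<sigma>_max: "\<And>V. V \<in> max_elems J \<Longrightarrow> \<sigma> V = V"
    using ex_max_elems_retraction[OF finJ] by metis
  define y where "y V g = (\<Sum>W\<in>{W\<in>J. \<sigma> W = V}. x W g)" for V g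
  show ?thesis
  proof
    show "\<forall>V\<in>max_elems J. y V \<in> H_fun G V"
    proof
      fix V assume V: "V \<in> max_elems J"
      then have "subgroup V G"
        using sub max_elems_subset by blast
      moreover have "x W \<in> H_fun G V" if "W \<in> J" "\<sigma> W = V" for W
        using H_fun_mono[OF _ \<open>subgroup V G\<close>] sub x \<sigma> that by blast
      ultimately show "y V \<in> H_fun G V"
        unfolding y_def[abs_def] using finJ by (intro H_fun_sum subgroup.subset) auto
    qed
    show "\<forall>g. (\<Sum>V\<in>max_elems J. y V g) = (\<Sum>V\<in>J. x V g)"
      unfolding y_def using \<sigma> finJ finite_subset[OF max_elems_subset finJ]
      by (intro allI sum.group) auto
    show "\<forall>V\<in>max_elems J. \<exists>R. finite R \<and> R \<subseteq> {W\<in>J. W \<subset> V} \<and>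
        x V = (\<lambda>g. y V g - (\<Sum>W\<in>R. x W g))"
    proof
      fix V assume V: "V \<in> max_elems J"
      define R where "R = {W\<in>J. \<sigma> W = V} - {V}"
      have fiber: "{W\<in>J. \<sigma> W = V} = insert V R"
        using V \<sigma>_max max_elems_subset by (auto simp: R_def)
      have "V \<notin> R"
        by (simp add: R_def)
      have "finite R"
        using finJ by (simp add: R_def)
      moreover have "R \<subseteq> {W\<in>J. W \<subset> V}"
        using \<sigma> by (auto simp: R_def)
      moreover have "x V = (\<lambda>g. y V g - (\<Sum>W\<in>R. x W g))"
        using \<open>finite R\<close> \<open>V \<notin> R\<close> by (simp add: y_def fiber)
      ultimately show "\<exists>R. finite R \<and> R \<subseteq> {W\<in>J. W \<subset> V} \<and>
          x V = (\<lambda>g. y V g - (\<Sum>W\<in>R. x W g))"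
        by blast
    qed
  qed
qed

end

section \<open>Homomorphisms out of an amalgamated free product\<close>

fun eval_word :: "('b, 'z) monoid_scheme \<Rightarrow> ('s \<Rightarrow> 'a \<Rightarrow> 'b) \<Rightarrow> ('s \<times> 'a) list \<Rightarrow> 'b" where
  "eval_word B f [] = \<one>\<^bsub>B\<^esub>"
| "eval_word B f ((V, v) # w) = f V v \<otimes>\<^bsub>B\<^esub> eval_word B f w"

context monoid
begin

lemma eval_word_closed:
  "(\<And>V v. (V, v) \<in> set w \<Longrightarrow> f V v \<in> carrier G) \<Longrightarrow> eval_word G f w \<in> carrier G"
proof (induction w)
  case (Cons p w)
  then show ?case by (cases p) auto
qed simp

lemma eval_word_append:
  assumes "\<And>V v. (V, v) \<in> set w1 \<union> set w2 \<Longrightarrow> f V v \<in> carrier G"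
  shows "eval_word G f (w1 @ w2) = eval_word G f w1 \<otimes> eval_word G f w2"
  using assms
proof (induction w1)
  case (Cons p w1)
  then show ?case by (cases p) (auto simp: m_assoc eval_word_closed)
qed (simp add: eval_word_closed)

end

lemma (in group) generate_eval_word:
  assumes f: "\<And>V v. V \<in> M \<Longrightarrow> v \<in> V \<Longrightarrow> f V v \<in> carrier G"
    and f_inv: "\<And>V v. V \<in> M \<Longrightarrow> v \<in> V \<Longrightarrow> \<exists>v'\<in>V. inv (f V v) = f V v'"
    and "s \<in> generate G (\<Union>V\<in>M. f V ` V)"
  shows "\<exists>w. set w \<subseteq> (SIGMA V:M. V) \<and> eval_word G f w = s"
  using assms(3)
proof (induction rule: generate.induct)
  case one
  show ?case by (intro exI[of _ "[]"]) simp
next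
  case (incl h)
  then obtain V v where "V \<in> M" "v \<in> V" "h = f V v" by blast
  then show ?case using f by (intro exI[of _ "[(V, v)]"]) simp
next
  case (inv h)
  then obtain V v where "V \<in> M" "v \<in> V" "h = f V v" by blast
  moreover obtain v' where "v' \<in> V" "inv (f V v) = f V v'"
    using f_inv \<open>V \<in> M\<close> \<open>v \<in> V\<close> by blast
  ultimately show ?case using f by (intro exI[of _ "[(V, v')]"]) simp
next
  case (eng h1 h2)
  then obtain w1 w2 where "set w1 \<subseteq> (SIGMA V:M. V)" "eval_word G f w1 = h1"
    "set w2 \<subseteq> (SIGMA V:M. V)" "eval_word G f w2 = h2" by blast
  then show ?case
    using eval_word_append[of w1 w2 f] f by (intro exI[of _ "w1 @ w2"]) auto
qed

definition transported_group ::
  "('b, 'z) monoid_scheme \<Rightarrow> 'b set \<Rightarrow> ('b \<Rightarrow> 'c) \<Rightarrow> ('c \<Rightarrow> 'b) \<Rightarrow> 'c monoid" where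
  "transported_group B S i e =
     \<lparr>carrier = i ` S, monoid.mult = (\<lambda>p q. i (e p \<otimes>\<^bsub>B\<^esub> e q)), one = i \<one>\<^bsub>B\<^esub>\<rparr>"

context
  fixes B :: "('b, 'z) monoid_scheme" and S :: "'b set" and i :: "'b \<Rightarrow> 'c" and e :: "'c \<Rightarrow> 'b"
  assumes B: "group B" and S: "subgroup S B" and e_i: "\<And>x. x \<in> S \<Longrightarrow> e (i x) = x"
begin

lemma group_transported_group: "group (transported_group B S i e)"
proof -
  interpret B: group B by (rule B)
  interpret S: subgroup S B by (rule S)
  show ?thesis
    unfolding transported_group_def
  proof (rule groupI)
    fix x assume "x \<in> carrier \<lparr>carrier = i ` S, monoid.mult = (\<lambda>p q. i (e p \<otimes>\<^bsub>B\<^esub> e q)), one = i \<one>\<^bsub>B\<^esub>\<rparr>"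
    then obtain a where a: "a \<in> S" "x = i a" by auto
    then show "\<exists>y\<in>carrier \<lparr>carrier = i ` S, monoid.mult = (\<lambda>p q. i (e p \<otimes>\<^bsub>B\<^esub> e q)), one = i \<one>\<^bsub>B\<^esub>\<rparr>.
        y \<otimes>\<^bsub>\<lparr>carrier = i ` S, monoid.mult = (\<lambda>p q. i (e p \<otimes>\<^bsub>B\<^esub> e q)), one = i \<one>\<^bsub>B\<^esub>\<rparr>\<^esub> x =
        \<one>\<^bsub>\<lparr>carrier = i ` S, monoid.mult = (\<lambda>p q. i (e p \<otimes>\<^bsub>B\<^esub> e q)), one = i \<one>\<^bsub>B\<^esub>\<rparr>\<^esub>"
      using e_i by (intro bexI[of _ "i (inv\<^bsub>B\<^esub> a)"]) auto
  qed (auto simp: e_i B.m_assoc)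
qed

lemma hom_into_transported_group:
  assumes "h \<in> hom H B" "h ` carrier H \<subseteq> S"
  shows "(\<lambda>x. i (h x)) \<in> hom H (transported_group B S i e)"
  using assms e_i by (auto simp: hom_def transported_group_def image_subset_iff)

lemma hom_from_transported_group:
  assumes "\<phi> \<in> hom H (transported_group B S i e)"
  shows "(\<lambda>x. e (\<phi> x)) \<in> hom H B"
proof -
  have \<phi>: "\<phi> x \<in> i ` S" if "x \<in> carrier H" for x
    using hom_in_carrier[OF assms that] by (simp add: transported_group_def)
  show ?thesis
  proof (rule homI)
    fix x assume "x \<in> carrier H"
    then obtain s where "s \<in> S" "\<phi> x = i s"
      using \<phi> by blast
    then show "e (\<phi> x) \<in> carrier B"
      using e_i subgroup.mem_carrier[OF S] by simp
  next
    fix x y assume x: "x \<in> carrier H" and y: "y \<in> carrier H"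
    obtain s t where st: "s \<in> S" "\<phi> x = i s" "t \<in> S" "\<phi> y = i t"
      using \<phi>[OF x] \<phi>[OF y] by blast
    then have "\<phi> (x \<otimes>\<^bsub>H\<^esub> y) = i (s \<otimes>\<^bsub>B\<^esub> t)"
      using hom_mult[OF assms x y] e_i by (simp add: transported_group_def)
    then show "e (\<phi> (x \<otimes>\<^bsub>H\<^esub> y)) = e (\<phi> x) \<otimes>\<^bsub>B\<^esub> e (\<phi> y)"
      using st e_i subgroup.m_closed[OF S] by simp
  qed
qed

end

text \<open>
  \<^const>\<open>amalgamated_free_product\<close> only tests against groups carried by words over
  \<open>'a set \<times> 'a\<close>. The subgroup of \<open>B\<close> generated by the images of the factors is such a group
  up to the choice of a spelling \<open>\<iota> s\<close> of each of its elements.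
\<close>

lemma amalgamated_free_product_extends:
  fixes B :: "('b, 'z) monoid_scheme"
  assumes G: "group G" and sub: "\<forall>V\<in>M. subgroup V G" and afp: "amalgamated_free_product G M A"
    and B: "group B" and f: "\<forall>V\<in>M. f V \<in> hom (G\<lparr>carrier := V\<rparr>) B"
    and fA: "\<forall>V\<in>M. \<forall>W\<in>M. \<forall>a\<in>A. f V a = f W a"
  shows "\<exists>\<phi>\<in>hom (G\<lparr>carrier := generate G (\<Union>M)\<rparr>) B. \<forall>V\<in>M. \<forall>v\<in>V. \<phi> v = f V v"
proof -
  interpret B: group B by (rule B)
  have f_car: "f V v \<in> carrier B" if "V \<in> M" "v \<in> V" for V v
    using that f by (auto simp: hom_def)
  have f_inv: "\<exists>v'\<in>V. inv\<^bsub>B\<^esub> (f V v) = f V v'" if "V \<in> M" "v \<in> V" for V v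
  proof
    interpret V: group "G\<lparr>carrier := V\<rparr>"
      using subgroup.subgroup_is_group[OF _ G] sub that(1) by blast
    interpret group_hom "G\<lparr>carrier := V\<rparr>" B "f V"
      using f that(1) by unfold_locales blast
    show "inv\<^bsub>G\<lparr>carrier := V\<rparr>\<^esub> v \<in> V"
      using V.inv_closed[of v] that(2) by simp
    show "inv\<^bsub>B\<^esub> (f V v) = f V (inv\<^bsub>G\<lparr>carrier := V\<rparr>\<^esub> v)"
      using that(2) by simp
  qed
  define S where "S = generate B (\<Union>V\<in>M. f V ` V)"
  have S: "subgroup S B"
    unfolding S_def using f_car by (intro B.generate_is_subgroup) auto
  have f_S: "f V v \<in> S" if "V \<in> M" "v \<in> V" for V v
    unfolding S_def using that by (auto intro: generate.incl)
  define \<iota> where "\<iota> s = (SOME w. set w \<subseteq> (SIGMA V:M. V) \<and> eval_word B f w = s)" for s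
  have ev_\<iota>: "eval_word B f (\<iota> s) = s" if "s \<in> S" for s
  proof -
    have "\<exists>w. set w \<subseteq> (SIGMA V:M. V) \<and> eval_word B f w = s"
      using that unfolding S_def by (intro B.generate_eval_word f_car f_inv)
    then show ?thesis
      unfolding \<iota>_def by (rule someI2_ex) simp
  qed
  define L :: "'a test_group" where "L = transported_group B S \<iota> (eval_word B f)"
  have "(\<lambda>v. \<iota> (f V v)) \<in> hom (G\<lparr>carrier := V\<rparr>) L" if "V \<in> M" for V
    unfolding L_def using f f_S that by (intro hom_into_transported_group[where i = \<iota> and e = "eval_word B f", OF B S ev_\<iota>]) auto
  moreover have "\<forall>V\<in>M. \<forall>W\<in>M. \<forall>a\<in>A. \<iota> (f V a) = \<iota> (f W a)"
    using fA by metis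
  ultimately have "group L \<and> (\<forall>V\<in>M. (\<lambda>v. \<iota> (f V v)) \<in> hom (G\<lparr>carrier := V\<rparr>) L) \<and>
      (\<forall>V\<in>M. \<forall>W\<in>M. \<forall>a\<in>A. \<iota> (f V a) = \<iota> (f W a))"
    unfolding L_def using group_transported_group[where i = \<iota> and e = "eval_word B f", OF B S ev_\<iota>] by blast
  from afp[unfolded amalgamated_free_product_def Let_def, rule_format, OF this]
  obtain \<phi> where \<phi>: "\<phi> \<in> hom (G\<lparr>carrier := generate G (\<Union>M)\<rparr>) L"
    and \<phi>_ext: "\<forall>V\<in>M. \<forall>v\<in>V. \<phi> v = \<iota> (f V v)"
    by blast
  have "\<forall>V\<in>M. \<forall>v\<in>V. eval_word B f (\<phi> v) = f V v"
    using \<phi>_ext ev_\<iota> f_S by simp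
  then show ?thesis
    by (intro bexI[OF _ hom_from_transported_group[where i = \<iota> and e = "eval_word B f", OF B S ev_\<iota> \<phi>[unfolded L_def]]]) simp
qed

section \<open>Normal forms in an amalgamated free product\<close>

definition rcos_rep :: "('a, 'm) monoid_scheme \<Rightarrow> 'a set \<Rightarrow> 'a \<Rightarrow> 'a" where
  "rcos_rep G H x = (SOME t. t \<in> H #>\<^bsub>G\<^esub> x)"

context group
begin

lemma rcos_rep_in: "subgroup H G \<Longrightarrow> x \<in> carrier G \<Longrightarrow> rcos_rep G H x \<in> H #> x"
  unfolding rcos_rep_def using rcos_self by (rule someI)

lemma rcos_rep_carrier: "subgroup H G \<Longrightarrow> x \<in> carrier G \<Longrightarrow> rcos_rep G H x \<in> carrier G"
  using rcos_rep_in r_coset_subset_G[OF subgroup.subset] by blast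

lemma rcos_rcos_rep: "subgroup H G \<Longrightarrow> x \<in> carrier G \<Longrightarrow> H #> rcos_rep G H x = H #> x"
  using repr_independence[OF rcos_rep_in] by simp

lemma rcos_rep_idem:
  assumes "subgroup H G" "x \<in> carrier G"
  shows "rcos_rep G H (rcos_rep G H x) = rcos_rep G H x"
proof -
  have "rcos_rep G H (rcos_rep G H x) = (SOME t. t \<in> H #> rcos_rep G H x)"
    by (rule rcos_rep_def)
  also have "\<dots> = rcos_rep G H x"
    unfolding rcos_rcos_rep[OF assms] by (rule rcos_rep_def[symmetric])
  finally show ?thesis .
qed

lemma rcos_rep_mult:
  assumes "subgroup H G" "h \<in> H" "x \<in> carrier G"
  shows "rcos_rep G H (h \<otimes> x) = rcos_rep G H x"
proof -
  have "h \<otimes> x \<in> H #> x"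
    using assms(2) subgroup.subset[OF assms(1)] assms(3) by (rule rcosI)
  then show ?thesis
    unfolding rcos_rep_def using repr_independence[OF _ assms(3,1)] by simp
qed

lemma mult_inv_rcos_rep:
  assumes "subgroup H G" "x \<in> carrier G"
  shows "x \<otimes> inv (rcos_rep G H x) \<in> H"
proof -
  have "x \<in> H #> rcos_rep G H x"
    using rcos_rcos_rep[OF assms] rcos_self[OF assms(2,1)] by simp
  then show ?thesis
    using subgroup.rcos_module_imp[OF assms(1) is_group rcos_rep_carrier[OF assms]] by blast
qed

lemma ex_equivariant_map_to_subgroup:
  assumes K: "subgroup K G"
  obtains \<kappa> where "\<And>g. g \<in> carrier G \<Longrightarrow> \<kappa> g \<in> K"
    and "\<And>k g. k \<in> K \<Longrightarrow> g \<in> carrier G \<Longrightarrow> \<kappa> (k \<otimes> g) = k \<otimes> \<kappa> g"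
proof
  show "g \<otimes> inv (rcos_rep G K g) \<in> K" if "g \<in> carrier G" for g
    using mult_inv_rcos_rep[OF K that] .
  fix k g assume k: "k \<in> K" and g: "g \<in> carrier G"
  have "k \<in> carrier G"
    using k subgroup.mem_carrier[OF K] by blast
  then show "k \<otimes> g \<otimes> inv (rcos_rep G K (k \<otimes> g)) = k \<otimes> (g \<otimes> inv (rcos_rep G K g))"
    using rcos_rep_mult[OF K k g] rcos_rep_carrier[OF K g] g by (simp add: m_assoc)
qed

end

definition starts_in :: "'s \<Rightarrow> ('s \<times> 'a) list \<Rightarrow> bool" where
  "starts_in V ts \<longleftrightarrow> ts \<noteq> [] \<and> fst (hd ts) = V"

lemma starts_in_simps [simp]:
  "\<not> starts_in V []"
  "starts_in V ((W, t) # ts) \<longleftrightarrow> W = V"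
  by (simp_all add: starts_in_def)

locale amalgam = group G for G (structure) +
  fixes M :: "'a set set" and A :: "'a set"
  assumes factor_subgroup: "V \<in> M \<Longrightarrow> subgroup V G"
    and amalgam_subgroup: "subgroup A G"
    and amalgam_subset: "V \<in> M \<Longrightarrow> A \<subseteq> V"
begin

lemma amalgam_carrier: "a \<in> A \<Longrightarrow> a \<in> carrier G"
  using subgroup.mem_carrier[OF amalgam_subgroup] .

lemma factor_carrier: "V \<in> M \<Longrightarrow> v \<in> V \<Longrightarrow> v \<in> carrier G"
  using subgroup.mem_carrier[OF factor_subgroup] .

lemma mult_notin_amalgam:
  assumes "a \<in> A" "x \<in> carrier G" "x \<notin> A"
  shows "a \<otimes> x \<notin> A" "x \<otimes> a \<notin> A"
proof -
  interpret A: subgroup A G by (rule amalgam_subgroup)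
  have "inv a \<otimes> (a \<otimes> x) = x" "(x \<otimes> a) \<otimes> inv a = x"
    using assms by (simp_all add: m_assoc[symmetric] m_assoc)
  then show "a \<otimes> x \<notin> A" "x \<otimes> a \<notin> A"
    using assms by (metis A.m_closed A.m_inv_closed)+
qed

abbreviation coset_rep :: "'a \<Rightarrow> 'a" where
  "coset_rep \<equiv> rcos_rep G A"

lemma coset_rep_closed:
  assumes "V \<in> M" "x \<in> V"
  shows "coset_rep x \<in> V"
proof -
  have "A #> x \<subseteq> V #> x"
    using amalgam_subset[OF assms(1)] by (auto simp: r_coset_def)
  also have "V #> x = V"
    using assms factor_carrier factor_subgroup by (simp add: coset_join2)
  finally show ?thesis
    using rcos_rep_in[OF amalgam_subgroup] factor_carrier[OF assms] by blast
qed

lemma coset_rep_notin: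
  assumes "x \<in> carrier G" "x \<notin> A"
  shows "coset_rep x \<notin> A"
proof
  assume "coset_rep x \<in> A"
  then have "A #> x = A"
    using rcos_rcos_rep[OF amalgam_subgroup assms(1)] coset_join2[OF _ amalgam_subgroup] amalgam_carrier
    by metis
  then show False
    using coset_join1[OF _ assms(1) amalgam_subgroup] assms(2) by blast
qed

text \<open>
  The normal form \<open>(a, [(V\<^sub>1, t\<^sub>1), \<dots>, (V\<^sub>n, t\<^sub>n)])\<close> stands for \<open>a t\<^sub>1 \<cdots> t\<^sub>n\<close> with
  \<open>a \<in> A\<close>, consecutive factors distinct, and each \<open>t\<^sub>i\<close> the chosen representative of a
  nontrivial right coset of \<open>A\<close> in \<open>V\<^sub>i\<close>.
\<close>

definition reduced :: "('a set \<times> 'a) list \<Rightarrow> bool" where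
  "reduced ts \<longleftrightarrow> (\<forall>(V, t)\<in>set ts. V \<in> M \<and> t \<in> V \<and> t \<notin> A \<and> coset_rep t = t) \<and>
     successively (\<lambda>p q. fst p \<noteq> fst q) ts"

lemma reduced_Nil [simp]: "reduced []"
  by (simp add: reduced_def)

lemma reduced_Cons [simp]:
  "reduced ((V, t) # ts) \<longleftrightarrow>
     V \<in> M \<and> t \<in> V \<and> t \<notin> A \<and> coset_rep t = t \<and> reduced ts \<and> \<not> starts_in V ts"
  by (cases ts) (auto simp: reduced_def)

definition normal_forms :: "('a \<times> ('a set \<times> 'a) list) set" where
  "normal_forms = {(a, ts). a \<in> A \<and> reduced ts}"

definition absorbed :: "'a set \<Rightarrow> ('a \<times> ('a set \<times> 'a) list) set" where
  "absorbed V = {(x, ts). x \<in> V \<and> reduced ts \<and> \<not> starts_in V ts}"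

fun absorb :: "'a set \<Rightarrow> 'a \<times> ('a set \<times> 'a) list \<Rightarrow> 'a \<times> ('a set \<times> 'a) list" where
  "absorb V (a, (W, t) # ts) = (if W = V then (a \<otimes> t, ts) else (a, (W, t) # ts))"
| "absorb V (a, []) = (a, [])"

definition normalize :: "'a set \<Rightarrow> 'a \<Rightarrow> ('a set \<times> 'a) list \<Rightarrow> 'a \<times> ('a set \<times> 'a) list" where
  "normalize V x ts =
     (if x \<in> A then (x, ts) else (x \<otimes> inv (coset_rep x), (V, coset_rep x) # ts))"

lemma absorb_other: "\<not> starts_in V ts \<Longrightarrow> absorb V (a, ts) = (a, ts)"
  by (cases ts) auto

lemma normalize_amalgam: "a \<in> A \<Longrightarrow> normalize V a ts = (a, ts)"
  by (simp add: normalize_def)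

lemma normalize_mult_rep:
  assumes "V \<in> M" "a \<in> A" "t \<in> V" "t \<notin> A" "coset_rep t = t"
  shows "normalize V (a \<otimes> t) ts = (a, (V, t) # ts)"
proof -
  have t: "t \<in> carrier G" using factor_carrier assms by blast
  have "a \<otimes> t \<notin> A" "coset_rep (a \<otimes> t) = t"
    using mult_notin_amalgam(1) rcos_rep_mult[OF amalgam_subgroup] assms t by auto
  then show ?thesis
    using assms(2) t amalgam_carrier by (simp add: normalize_def m_assoc)
qed

lemma absorb_in:
  assumes "V \<in> M" "\<omega> \<in> normal_forms"
  shows "absorb V \<omega> \<in> absorbed V"
proof -
  obtain a ts where \<omega>: "\<omega> = (a, ts)" "a \<in> A" "reduced ts"
    using assms(2) by (auto simp: normal_forms_def)
  show ?thesis
  proof (cases "starts_in V ts")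
    case True
    then obtain t ts' where "ts = (V, t) # ts'" by (cases ts) (auto simp: starts_in_def)
    then show ?thesis
      using \<omega> assms(1) amalgam_subset[OF assms(1)]
      by (auto simp: absorbed_def intro: subgroup.m_closed[OF factor_subgroup])
  next
    case False
    then show ?thesis
      using \<omega> amalgam_subset[OF assms(1)] by (auto simp: absorbed_def absorb_other)
  qed
qed

lemma normalize_in:
  assumes "V \<in> M" "(x, ts) \<in> absorbed V"
  shows "normalize V x ts \<in> normal_forms"
proof -
  have x: "x \<in> V" "x \<in> carrier G" and ts: "reduced ts" "\<not> starts_in V ts"
    using assms factor_carrier by (auto simp: absorbed_def)
  then show ?thesis
    using assms(1) mult_inv_rcos_rep[OF amalgam_subgroup] coset_rep_notin
      rcos_rep_idem[OF amalgam_subgroup] coset_rep_closed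
    by (auto simp: normalize_def normal_forms_def)
qed

lemma absorb_normalize:
  assumes "V \<in> M" "(x, ts) \<in> absorbed V"
  shows "absorb V (normalize V x ts) = (x, ts)"
proof -
  have x: "x \<in> carrier G" and ts: "\<not> starts_in V ts"
    using assms factor_carrier by (auto simp: absorbed_def)
  show ?thesis
    using x ts rcos_rep_carrier[OF amalgam_subgroup x] by (simp add: normalize_def absorb_other m_assoc)
qed

lemma normalize_absorb:
  assumes "V \<in> M" "\<omega> \<in> normal_forms"
  shows "case_prod (normalize V) (absorb V \<omega>) = \<omega>"
proof -
  obtain a ts where \<omega>: "\<omega> = (a, ts)" "a \<in> A" "reduced ts"
    using assms(2) by (auto simp: normal_forms_def)
  show ?thesis
  proof (cases "starts_in V ts")
    case True
    then obtain t ts' where "ts = (V, t) # ts'" by (cases ts) (auto simp: starts_in_def)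
    then show ?thesis
      using \<omega> assms(1) normalize_mult_rep by simp
  next
    case False
    then show ?thesis
      using \<omega> by (simp add: absorb_other normalize_amalgam)
  qed
qed

definition act :: "'a set \<Rightarrow> 'a \<Rightarrow> 'a \<times> ('a set \<times> 'a) list \<Rightarrow> 'a \<times> ('a set \<times> 'a) list" where
  "act V v \<omega> = (case absorb V \<omega> of (x, ts) \<Rightarrow> normalize V (v \<otimes> x) ts)"

lemma absorbed_mult:
  "V \<in> M \<Longrightarrow> v \<in> V \<Longrightarrow> (x, ts) \<in> absorbed V \<Longrightarrow> (v \<otimes> x, ts) \<in> absorbed V"
  by (auto simp: absorbed_def intro: subgroup.m_closed[OF factor_subgroup])

lemma act_in:
  assumes "V \<in> M" "v \<in> V" "\<omega> \<in> normal_forms"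
  shows "act V v \<omega> \<in> normal_forms"
  using absorb_in[OF assms(1,3)] absorbed_mult[OF assms(1,2)] normalize_in[OF assms(1)]
  by (auto simp: act_def split: prod.split)

lemma act_mult:
  assumes "V \<in> M" "v \<in> V" "w \<in> V" "\<omega> \<in> normal_forms"
  shows "act V v (act V w \<omega>) = act V (v \<otimes> w) \<omega>"
proof -
  obtain x ts where xts: "absorb V \<omega> = (x, ts)" "(x, ts) \<in> absorbed V"
    using absorb_in[OF assms(1,4)] by (cases "absorb V \<omega>") auto
  have "x \<in> carrier G"
    using xts(2) factor_carrier[OF assms(1)] by (auto simp: absorbed_def)
  then show ?thesis
    using xts absorb_normalize[OF assms(1) absorbed_mult[OF assms(1,3) xts(2)]]
      factor_carrier[OF assms(1)] assms(2,3)
    by (simp add: act_def m_assoc)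
qed

lemma act_one:
  assumes "V \<in> M" "\<omega> \<in> normal_forms"
  shows "act V \<one> \<omega> = \<omega>"
proof -
  obtain x ts where xts: "absorb V \<omega> = (x, ts)" "(x, ts) \<in> absorbed V"
    using absorb_in[OF assms] by (cases "absorb V \<omega>") auto
  then have "x \<in> carrier G"
    using factor_carrier[OF assms(1)] by (auto simp: absorbed_def)
  then show ?thesis
    using xts normalize_absorb[OF assms] by (simp add: act_def)
qed

lemma act_amalgam:
  assumes "V \<in> M" "u \<in> A" "(b, ts) \<in> normal_forms"
  shows "act V u (b, ts) = (u \<otimes> b, ts)"
proof -
  have b: "b \<in> A" "u \<otimes> b \<in> A" and ts: "reduced ts"
    using assms subgroup.m_closed[OF amalgam_subgroup] by (auto simp: normal_forms_def)
  show ?thesis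
  proof (cases "starts_in V ts")
    case True
    then obtain t ts' where ts': "ts = (V, t) # ts'" by (cases ts) (auto simp: starts_in_def)
    then have "t \<in> V" "t \<notin> A" "coset_rep t = t"
      using ts by auto
    moreover have "u \<otimes> (b \<otimes> t) = (u \<otimes> b) \<otimes> t"
      using assms(1,2) b(1) \<open>t \<in> V\<close> factor_carrier amalgam_carrier by (simp add: m_assoc)
    ultimately show ?thesis
      using ts' assms(1) b normalize_mult_rep by (simp add: act_def)
  next
    case False
    then show ?thesis
      using b by (simp add: act_def absorb_other normalize_amalgam)
  qed
qed

lemma act_Cons:
  assumes "V \<in> M" "v \<in> V" "v \<notin> A" "(b, ts) \<in> normal_forms" "\<not> starts_in V ts"
  shows "\<exists>a t. act V v (b, ts) = (a, (V, t) # ts)"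
proof -
  have "v \<otimes> b \<notin> A"
    using assms mult_notin_amalgam(2) factor_carrier by (auto simp: normal_forms_def)
  then show ?thesis
    using assms(5) by (simp add: act_def absorb_other normalize_def)
qed

definition perm :: "'a set \<Rightarrow> 'a \<Rightarrow> 'a \<times> ('a set \<times> 'a) list \<Rightarrow> 'a \<times> ('a set \<times> 'a) list" where
  "perm V v = restrict (act V v) normal_forms"

lemma perm_Bij:
  assumes "V \<in> M" "v \<in> V"
  shows "perm V v \<in> Bij normal_forms"
proof -
  interpret V: subgroup V G by (rule factor_subgroup[OF assms(1)])
  have "bij_betw (act V v) normal_forms normal_forms"
  proof (rule bij_betw_byWitness[where f' = "act V (inv v)"])
    show "\<forall>\<omega>\<in>normal_forms. act V (inv v) (act V v \<omega>) = \<omega>"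
      "\<forall>\<omega>\<in>normal_forms. act V v (act V (inv v) \<omega>) = \<omega>"
      using act_mult[OF assms(1)] act_one[OF assms(1)] assms(2) by simp_all
    show "act V v ` normal_forms \<subseteq> normal_forms" "act V (inv v) ` normal_forms \<subseteq> normal_forms"
      using act_in[OF assms(1)] assms(2) by auto
  qed
  then show ?thesis
    unfolding perm_def Bij_def by simp
qed

lemma perm_hom: "V \<in> M \<Longrightarrow> perm V \<in> hom (G\<lparr>carrier := V\<rparr>) (BijGroup normal_forms)"
proof (rule homI)
  fix v w assume V: "V \<in> M" and "v \<in> carrier (G\<lparr>carrier := V\<rparr>)" "w \<in> carrier (G\<lparr>carrier := V\<rparr>)"
  then have vw: "v \<in> V" "w \<in> V" by simp_all
  have "perm V (v \<otimes> w) = compose normal_forms (perm V v) (perm V w)"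
    unfolding perm_def compose_def using act_mult[OF V vw] act_in[OF V vw(2)]
    by (intro restrict_ext) simp
  then show "perm V (v \<otimes>\<^bsub>G\<lparr>carrier := V\<rparr>\<^esub> w) = perm V v \<otimes>\<^bsub>BijGroup normal_forms\<^esub> perm V w"
    using perm_Bij[OF V] vw by (simp add: BijGroup_def)
qed (simp add: BijGroup_def perm_Bij)

lemma perm_amalgam: "V \<in> M \<Longrightarrow> W \<in> M \<Longrightarrow> a \<in> A \<Longrightarrow> perm V a = perm W a"
  unfolding perm_def using act_amalgam by (intro restrict_ext) (auto simp: normal_forms_def)

lemma ex_equivariant_normal_form_map:
  assumes afp: "amalgamated_free_product G M A"
  obtains \<tau> where "\<And>g. g \<in> carrier G \<Longrightarrow> \<tau> g \<in> normal_forms"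
    and "\<And>V v g. V \<in> M \<Longrightarrow> v \<in> V \<Longrightarrow> g \<in> carrier G \<Longrightarrow> \<tau> (v \<otimes> g) = act V v (\<tau> g)"
proof -
  define K where "K = generate G (\<Union>M)"
  have K: "subgroup K G"
    unfolding K_def using factor_carrier by (intro generate_is_subgroup) blast
  have VK: "v \<in> K" if "V \<in> M" "v \<in> V" for V v
    unfolding K_def using that by (blast intro: generate.incl)
  obtain \<phi> where \<phi>: "\<phi> \<in> hom (G\<lparr>carrier := K\<rparr>) (BijGroup normal_forms)"
    and \<phi>_perm: "\<forall>V\<in>M. \<forall>v\<in>V. \<phi> v = perm V v"
    using amalgamated_free_product_extends[OF is_group _ afp group_BijGroup, of perm]
      factor_subgroup perm_hom perm_amalgam
    unfolding K_def by blast
  obtain \<kappa> where \<kappa>: "\<And>g. g \<in> carrier G \<Longrightarrow> \<kappa> g \<in> K"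
    and \<kappa>_mult: "\<And>k g. k \<in> K \<Longrightarrow> g \<in> carrier G \<Longrightarrow> \<kappa> (k \<otimes> g) = k \<otimes> \<kappa> g"
    using ex_equivariant_map_to_subgroup[OF K] by blast
  have Bij: "\<phi> k \<in> Bij normal_forms" if "k \<in> K" for k
    using hom_in_carrier[OF \<phi>] that by (simp add: BijGroup_def)
  define \<omega>\<^sub>0 where "\<omega>\<^sub>0 = (\<one>, [] :: ('a set \<times> 'a) list)"
  have \<omega>\<^sub>0: "\<omega>\<^sub>0 \<in> normal_forms"
    by (simp add: \<omega>\<^sub>0_def normal_forms_def subgroup.one_closed[OF amalgam_subgroup])
  show thesis
  proof (rule that[of "\<lambda>g. \<phi> (\<kappa> g) \<omega>\<^sub>0"])
    show "\<phi> (\<kappa> g) \<omega>\<^sub>0 \<in> normal_forms" if "g \<in> carrier G" for g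
      using Bij[OF \<kappa>[OF that]] \<omega>\<^sub>0 by (auto simp: Bij_def bij_betw_def)
    fix V v g assume V: "V \<in> M" and v: "v \<in> V" and g: "g \<in> carrier G"
    have "\<phi> (\<kappa> (v \<otimes> g)) = \<phi> v \<otimes>\<^bsub>BijGroup normal_forms\<^esub> \<phi> (\<kappa> g)"
      using hom_mult[OF \<phi>, of v "\<kappa> g"] \<kappa>_mult[OF VK[OF V v] g] VK[OF V v] \<kappa>[OF g] by simp
    also have "\<dots> = compose normal_forms (perm V v) (\<phi> (\<kappa> g))"
      using Bij[OF VK[OF V v]] Bij[OF \<kappa>[OF g]] \<phi>_perm V v by (simp add: BijGroup_def)
    finally show "\<phi> (\<kappa> (v \<otimes> g)) \<omega>\<^sub>0 = act V v (\<phi> (\<kappa> g) \<omega>\<^sub>0)"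
      using \<omega>\<^sub>0 Bij[OF \<kappa>[OF g]] by (auto simp: compose_def perm_def Bij_def bij_betw_def)
  qed
qed

lemma ex_reduced_word_map:
  assumes "amalgamated_free_product G M A" "M \<noteq> {}"
  obtains D :: "'a \<Rightarrow> ('a set \<times> 'a) list"
  where "\<And>u g. u \<in> A \<Longrightarrow> g \<in> carrier G \<Longrightarrow> D (u \<otimes> g) = D g"
    and "\<And>V v g. V \<in> M \<Longrightarrow> v \<in> V \<Longrightarrow> v \<notin> A \<Longrightarrow> g \<in> carrier G \<Longrightarrow> \<not> starts_in V (D g) \<Longrightarrow>
           \<exists>t. D (v \<otimes> g) = (V, t) # D g"
proof -
  obtain \<tau> where \<tau>: "\<And>g. g \<in> carrier G \<Longrightarrow> \<tau> g \<in> normal_forms"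
    and \<tau>_act: "\<And>V v g. V \<in> M \<Longrightarrow> v \<in> V \<Longrightarrow> g \<in> carrier G \<Longrightarrow> \<tau> (v \<otimes> g) = act V v (\<tau> g)"
    using ex_equivariant_normal_form_map[OF assms(1)] by blast
  obtain V\<^sub>0 where V\<^sub>0: "V\<^sub>0 \<in> M" using assms(2) by blast
  show thesis
  proof (rule that[of "\<lambda>g. snd (\<tau> g)"])
    fix u g assume "u \<in> A" "g \<in> carrier G"
    then show "snd (\<tau> (u \<otimes> g)) = snd (\<tau> g)"
      using \<tau>_act[OF V\<^sub>0, of u g] act_amalgam[OF V\<^sub>0, of u "fst (\<tau> g)" "snd (\<tau> g)"] \<tau>
        amalgam_subset[OF V\<^sub>0] by auto
  next
    fix V v g assume "V \<in> M" "v \<in> V" "v \<notin> A" "g \<in> carrier G" "\<not> starts_in V (snd (\<tau> g))"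
    then show "\<exists>t. snd (\<tau> (v \<otimes> g)) = (V, t) # snd (\<tau> g)"
      using \<tau>_act act_Cons[of V v "fst (\<tau> g)" "snd (\<tau> g)"] \<tau> by fastforce
  qed
qed

end

section \<open>Coset sums vanish along the amalgamated subgroup\<close>

text \<open>
  Weighted so that reading the same word from another factor, or prepending one letter, both
  make it strictly deeper.
\<close>

definition depth :: "'s \<Rightarrow> ('s \<times> 'a) list \<Rightarrow> nat" where
  "depth V ts = 2 * length ts + (if starts_in V ts then 0 else 1)"

locale reduced_word_map = amalgam +
  fixes D :: "'a \<Rightarrow> ('a set \<times> 'a) list"
  assumes word_amalgam_mult: "u \<in> A \<Longrightarrow> g \<in> carrier G \<Longrightarrow> D (u \<otimes> g) = D g"
    and word_Cons: "V \<in> M \<Longrightarrow> v \<in> V \<Longrightarrow> v \<notin> A \<Longrightarrow> g \<in> carrier G \<Longrightarrow> \<not> starts_in V (D g) \<Longrightarrow>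
      \<exists>t. D (v \<otimes> g) = (V, t) # D g"
begin

context
  fixes y :: "'a set \<Rightarrow> 'a \<Rightarrow> int"
  assumes finM: "finite M" and y: "\<And>V. V \<in> M \<Longrightarrow> y V \<in> H_fun G V"
    and sum_y: "\<And>g. (\<Sum>V\<in>M. y V g) = 0"
begin

lemma y_finite_support: "V \<in> M \<Longrightarrow> finite {x. y V x \<noteq> 0}"
  using y by (simp add: H_fun_def group_ring_Z_def)

lemma ex_deeper_nonzero_coset_sum:
  assumes V: "V \<in> M" and g: "g \<in> carrier G" and nz: "supp_sum (y V) (A #> g) \<noteq> 0"
  shows "\<exists>V'\<in>M. \<exists>g'\<in>carrier G. supp_sum (y V') (A #> g') \<noteq> 0 \<and> depth V (D g) < depth V' (D g')"
proof (cases "starts_in V (D g)")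
  case True
  have "(\<Sum>W\<in>M. supp_sum (y W) (A #> g)) = supp_sum (\<lambda>x. \<Sum>W\<in>M. y W x) (A #> g)"
    using supp_sum_sum[of M y "A #> g"] finM y_finite_support by simp
  also have "\<dots> = 0"
    using sum_y by (simp add: supp_sum_def)
  finally have "(\<Sum>W\<in>M. supp_sum (y W) (A #> g)) = 0" .
  then have "(\<Sum>W\<in>M - {V}. supp_sum (y W) (A #> g)) \<noteq> 0"
    using nz sum.remove[OF finM V, of "\<lambda>W. supp_sum (y W) (A #> g)"] by simp
  then obtain W where W: "W \<in> M" "W \<noteq> V" "supp_sum (y W) (A #> g) \<noteq> 0"
    by (blast elim: sum.not_neutral_contains_not_neutral)
  have "depth V (D g) < depth W (D g)"
    using True W(2) by (simp add: depth_def starts_in_def)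
  then show ?thesis
    using W g by blast
next
  case False
  have "\<exists>v\<in>V. v \<notin> A \<and> supp_sum (y V) (A #> (v \<otimes> g)) \<noteq> 0"
  proof (rule ccontr)
    assume "\<not> ?thesis"
    then have "supp_sum (y V) (A #> g) = supp_sum (y V) (V #> g)"
      using supp_sum_subcoset[OF amalgam_subgroup factor_subgroup[OF V] amalgam_subset[OF V] g
          y_finite_support[OF V]] by blast
    also have "\<dots> = 0"
      using y[OF V] g H_fun_iff[OF subgroup.subset[OF factor_subgroup[OF V]]] by blast
    finally show False
      using nz by simp
  qed
  then obtain v where v: "v \<in> V" "v \<notin> A" "supp_sum (y V) (A #> (v \<otimes> g)) \<noteq> 0"
    by blast
  obtain t where "D (v \<otimes> g) = (V, t) # D g"
    using word_Cons[OF V v(1,2) g False] by blast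
  then have "depth V (D g) < depth V (D (v \<otimes> g))"
    using False by (simp add: depth_def)
  then show ?thesis
    using v V g factor_carrier by blast
qed

lemma finite_nonzero_coset_depths:
  "finite {depth V (D g) |V g. V \<in> M \<and> g \<in> carrier G \<and> supp_sum (y V) (A #> g) \<noteq> 0}"
proof (rule finite_subset)
  show "finite ((\<lambda>(V, x). depth V (D x)) ` (M \<times> (\<Union>W\<in>M. {x. y W x \<noteq> 0})))"
    using finM y_finite_support by simp
  show "{depth V (D g) |V g. V \<in> M \<and> g \<in> carrier G \<and> supp_sum (y V) (A #> g) \<noteq> 0} \<subseteq>
      (\<lambda>(V, x). depth V (D x)) ` (M \<times> (\<Union>W\<in>M. {x. y W x \<noteq> 0}))"
  proof (safe)
    fix V g assume Vg: "V \<in> M" "g \<in> carrier G" "supp_sum (y V) (A #> g) \<noteq> 0"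
    then obtain x where x: "x \<in> A #> g" "y V x \<noteq> 0"
      unfolding supp_sum_def by (metis (mono_tags, lifting) empty_Collect_eq sum.empty)
    then obtain u where "u \<in> A" "x = u \<otimes> g"
      unfolding r_coset_def by blast
    then have "depth V (D g) = depth V (D x)"
      using Vg(2) word_amalgam_mult by simp
    then show "depth V (D g) \<in> (\<lambda>(V, x). depth V (D x)) ` (M \<times> (\<Union>W\<in>M. {x. y W x \<noteq> 0}))"
      using Vg(1) x(2) by (intro image_eqI[of _ _ "(V, x)"]) auto
  qed
qed

lemma amalgam_coset_sums_eq_0:
  assumes "V \<in> M" "g \<in> carrier G"
  shows "supp_sum (y V) (A #> g) = 0"
proof (rule ccontr)
  define depths
    where "depths = {depth V (D g) |V g. V \<in> M \<and> g \<in> carrier G \<and> supp_sum (y V) (A #> g) \<noteq> 0}"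
  assume "supp_sum (y V) (A #> g) \<noteq> 0"
  then have "Max depths \<in> depths"
    using assms finite_nonzero_coset_depths unfolding depths_def by (intro Max_in) auto
  then obtain V g where Vg: "V \<in> M" "g \<in> carrier G" "supp_sum (y V) (A #> g) \<noteq> 0"
    and max: "depth V (D g) = Max depths"
    unfolding depths_def by auto
  obtain V' g' where "V' \<in> M" "g' \<in> carrier G" "supp_sum (y V') (A #> g') \<noteq> 0"
    and deeper: "depth V (D g) < depth V' (D g')"
    using ex_deeper_nonzero_coset_sum[OF Vg] by blast
  then have "depth V' (D g') \<le> Max depths"
    using finite_nonzero_coset_depths unfolding depths_def by (intro Max_ge) auto
  then show False
    using max deeper by simp
qed

end

end

lemma (in amalgam) H_fun_amalgam:
  assumes "amalgamated_free_product G M A" "finite M" "\<And>V. V \<in> M \<Longrightarrow> y V \<in> H_fun G V"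
    and "\<And>g. (\<Sum>V\<in>M. y V g) = 0" and V: "V \<in> M"
  shows "y V \<in> H_fun G A"
proof -
  obtain D where "reduced_word_map G M A D"
    using ex_reduced_word_map[OF assms(1)] V unfolding reduced_word_map_def reduced_word_map_axioms_def
    by (metis amalgam_axioms empty_iff)
  then have "\<forall>g\<in>carrier G. supp_sum (y V) (A #> g) = 0"
    using reduced_word_map.amalgam_coset_sums_eq_0[OF _ assms(2-4) V] by blast
  moreover have "y V \<in> group_ring_Z G"
    using assms(3)[OF V] by (simp add: H_fun_def)
  ultimately show ?thesis
    using H_fun_iff[OF subgroup.subset[OF amalgam_subgroup]] by blast
qed

lemma (in group) max_elems_component_in_Im_H:
  assumes P: "\<forall>W\<in>P. subgroup W G" and J: "finite J" "J \<subseteq> P"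
    and afp: "amalgamated_free_product G (max_elems J) (\<Inter>(max_elems J))"
    and Inter: "\<Inter>(max_elems J) \<in> P"
    and y: "\<forall>W\<in>max_elems J. y W \<in> H_fun G W" and sum_y: "\<forall>g. (\<Sum>W\<in>max_elems J. y W g) = 0"
    and V: "V \<in> max_elems J"
  shows "y V \<in> Im_H G P V"
proof (cases "max_elems J = {V}")
  case True
  then have "y V = (\<lambda>g. 0)"
    using sum_y by auto
  then show ?thesis
    using Im_H_zero by simp
next
  case False
  then obtain V' where V': "V' \<in> max_elems J" "V' \<noteq> V"
    using V by blast
  have "amalgam G (max_elems J) (\<Inter>(max_elems J))"
  proof (intro amalgam.intro amalgam_axioms.intro is_group)
    show "subgroup W G" if "W \<in> max_elems J" for W
      using that P J(2) max_elems_subset by blast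
    show "subgroup (\<Inter>(max_elems J)) G"
      using P Inter by blast
    show "\<Inter>(max_elems J) \<subseteq> W" if "W \<in> max_elems J" for W
      using that by blast
  qed
  then have "y V \<in> H_fun G (\<Inter>(max_elems J))"
    using amalgam.H_fun_amalgam[OF _ afp finite_subset[OF max_elems_subset J(1)]] y sum_y V by blast
  then show ?thesis
    using H_fun_subset_Im_H[OF Inter Inter_max_elems_psubset[OF V V'(1)]] V'(2) by blast
qed

theorem proposition4p1:
  fixes G :: "('a, 'm) monoid_scheme" and P :: "'a set set" and U :: "'a set"
  assumes "group G"
    and "\<forall>V\<in>P. subgroup V G"
    and "{\<one>\<^bsub>G\<^esub>} \<in> P"
    and "colimit_cone G P"
    and "U \<in> P"
    and "\<forall>J. finite J \<and> J \<noteq> {} \<and> J \<subseteq> {V\<in>P. V \<subseteq> U} \<longrightarrow>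
           amalgamated_free_product G (max_elems J) (\<Inter>(max_elems J)) \<and>
           \<Inter>(max_elems J) \<in> P"
  shows "pseudo_projective_at G P U"
  unfolding pseudo_projective_at_def
proof (intro allI impI ballI)
  interpret group G by (rule assms(1))
  fix J x V
  assume "finite J \<and> J \<subseteq> {V\<in>P. V \<subseteq> U} \<and> (\<forall>V\<in>J. x V \<in> H_fun G V) \<and> (\<forall>g. (\<Sum>V\<in>J. x V g) = 0)"
    and V: "V \<in> max_elems J"
  then have J: "finite J" "J \<subseteq> {V\<in>P. V \<subseteq> U}" "J \<noteq> {}" and x: "\<forall>V\<in>J. x V \<in> H_fun G V"
    and sum_x: "\<forall>g. (\<Sum>V\<in>J. x V g) = 0"
    using max_elems_subset by auto
  obtain y where y: "\<forall>V\<in>max_elems J. y V \<in> H_fun G V"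
    and sum_y: "\<forall>g. (\<Sum>V\<in>max_elems J. y V g) = (\<Sum>V\<in>J. x V g)"
    and decomp: "\<forall>V\<in>max_elems J. \<exists>R. finite R \<and> R \<subseteq> {W\<in>J. W \<subset> V} \<and>
                   x V = (\<lambda>g. y V g - (\<Sum>W\<in>R. x W g))"
    by (rule collect_at_max_elems[OF J(1) _ x]) (use J(2) assms(2) in blast)
  obtain R where R: "finite R" "R \<subseteq> {W\<in>J. W \<subset> V}" and xV: "x V = (\<lambda>g. y V g - (\<Sum>W\<in>R. x W g))"
    using decomp V by blast
  have "y V \<in> Im_H G P V"
    using max_elems_component_in_Im_H[OF assms(2) J(1) _ _ _ y _ V] assms(6) J sum_y sum_x by auto
  moreover have "(\<lambda>g. \<Sum>W\<in>R. x W g) \<in> Im_H G P V"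
    unfolding Im_H_def using R J(2) x
    by (intro CollectI exI[of _ R] exI[of _ x] conjI refl) auto
  ultimately show "x V \<in> Im_H G P V"
    unfolding xV by (rule Im_H_diff[OF assms(2)])
qed

end
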